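(* Let $d\ge2$, $p\in[0,1]$, and let $N_\infty$ be the number of infinite connected components of the hole graph $G(\omega)$. If $1\le k<\infty$ and $P_p(N_\infty=k)=1$, then $k=1$.
   Context: A face is a $(d-1)$-dimensional elementary cube in $\mathbb{R}^d$ (a product of intervals $[l,l]$ or $[l,l+1]$, $l\in\mathbb{Z}$, with exactly one degenerate factor). In face percolation with parameter $p$ each face is open independently with probability $p$ (measure $P_p$); $K(\omega)$ is the union of open faces. The hole graph $G(\omega)$ has as vertices the holes, i.e. the bounded connected components of $\mathbb{R}^d\setminus K(\omega)$ (obtained as the limit $\bigcup_n G^n$ of the graphs of bounded components of $\mathbb{R}^d\setminus(K(\omega)\cap[-n,n]^d)$), two holes adjacent iff some face lies in the boundary of both. *)

theory Defs
  imports "HOL-Probability.Probability"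
begin

text \<open>A face is indexed by its lower corner v in Z^d and its degenerate coordinate i:
  it is the product of [v_i,v_i] in coordinate i and [v_j,v_j+1] in every other coordinate j.\<close>

type_synonym 'n face = "(int ^ 'n) \<times> 'n"

definition face_set :: "'n::finite face \<Rightarrow> (real ^ 'n) set" where
  "face_set F = (let v = fst F; i = snd F in
     {x. x $ i = of_int (v $ i) \<and>
         (\<forall>j. j \<noteq> i \<longrightarrow> of_int (v $ j) \<le> x $ j \<and> x $ j \<le> of_int (v $ j) + 1)})"

definition face_perc :: "real \<Rightarrow> ('n::finite face \<Rightarrow> bool) measure" where
  "face_perc p = PiM UNIV (\<lambda>_. measure_pmf (bernoulli_pmf p))"

definition Kset :: "('n::finite face \<Rightarrow> bool) \<Rightarrow> (real ^ 'n) set" where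
  "Kset \<omega> = (\<Union>F\<in>{F. \<omega> F}. face_set F)"

definition holes :: "('n::finite face \<Rightarrow> bool) \<Rightarrow> (real ^ 'n) set set" where
  "holes \<omega> = {H. \<exists>x. x \<notin> Kset \<omega> \<and> H = connected_component_set (- Kset \<omega>) x \<and> bounded H}"

definition hole_edges :: "('n::finite face \<Rightarrow> bool) \<Rightarrow> ((real ^ 'n) set \<times> (real ^ 'n) set) set" where
  "hole_edges \<omega> = {(H1, H2). H1 \<in> holes \<omega> \<and> H2 \<in> holes \<omega> \<and> H1 \<noteq> H2 \<and>
      (\<exists>F. face_set F \<subseteq> frontier H1 \<and> face_set F \<subseteq> frontier H2)}"

definition hole_components :: "('n::finite face \<Rightarrow> bool) \<Rightarrow> (real ^ 'n) set set set" where
  "hole_components \<omega> = holes \<omega> // ((hole_edges \<omega>)\<^sup>*)"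

definition N_inf :: "('n::finite face \<Rightarrow> bool) \<Rightarrow> enat" where
  "N_inf \<omega> = (let S = {C \<in> hole_components \<omega>. infinite C} in
                if finite S then enat (card S) else \<infinity>)"

end

theory Submission
  imports Defs
begin

text \<open>Suppose \<open>N\<^sub>\<infinity> = k\<close> almost surely with \<open>1 \<le> k < \<infinity>\<close> and fix a typical configuration \<open>\<omega>\<close>.
  Its finitely many infinite hole components all meet some box \<open>[-n, n]\<^sup>d\<close>.  For \<open>p > 0\<close> the
  face percolation measure is insertion tolerant, so opening the finitely many faces inside the box
  again gives \<open>N\<^sub>\<infinity> = k\<close> almost surely.  In the opened configuration the unit cubes of the box are
  holes, any two of them are joined through neighbouring cubes, and every infinite component of
  the new hole graph contains one of them: a component avoiding them consists of holes of \<open>\<omega>\<close>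
  lying outside the box and is closed under adjacency in \<open>\<omega>\<close>, so it would be an infinite
  component of the hole graph of \<open>\<omega>\<close> missing the box.  Hence \<open>k \<le> 1\<close>.  For \<open>p = 0\<close> no face
  is open, there are no holes and \<open>N\<^sub>\<infinity> = 0\<close>.  The argument works in every dimension.\<close>

lemma dist_vec_nth_less: "dist x y < r \<Longrightarrow> \<bar>x $ j - y $ j\<bar> < (r::real)"
  using dist_vec_nth_le[of x j y] by (simp add: dist_real_def)

lemma closed_segment_vec_nth_const:
  assumes "p \<in> closed_segment a b" "a $ l = b $ l"
  shows "p $ l = (a $ l :: real)"
proof -
  obtain u where "p = (1 - u) *\<^sub>R a + u *\<^sub>R b" using assms(1) by (auto simp: in_segment)
  then have "p $ l = (1 - u) * a $ l + u * b $ l" by simp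
  also have "\<dots> = a $ l" using assms(2) by (simp add: algebra_simps)
  finally show ?thesis .
qed

lemma subset_frontier_open: "open H \<Longrightarrow> S \<subseteq> closure H \<Longrightarrow> S \<inter> H = {} \<Longrightarrow> S \<subseteq> frontier H"
  by (auto simp: frontier_def interior_open)

lemma connected_component_subset_of_frontier_disjoint:
  assumes "frontier T \<inter> S = {}" "x \<in> T"
  shows "connected_component_set S x \<subseteq> T"
proof (rule ccontr)
  let ?C = "connected_component_set S x"
  assume "\<not> ?C \<subseteq> T"
  then have "x \<in> S" by (metis connected_component_eq_empty empty_subsetI)
  then have "x \<in> ?C \<inter> T" using assms(2) by (simp add: connected_component_refl)
  then have "?C \<inter> frontier T \<noteq> {}"
    using connected_Int_frontier[of ?C T] \<open>\<not> ?C \<subseteq> T\<close> by blast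
  then show False using assms(1) connected_component_subset by blast
qed

lemma component_closure_meets_removed_closed_set:
  fixes S B :: "'a::real_normed_vector set"
  assumes "open S" "closed B" "z \<in> S - B" "connected_component_set S z \<inter> B \<noteq> {}"
  obtains x where "x \<in> connected_component_set S z" "x \<in> B" "x \<in> closure (connected_component_set (S - B) z)"
proof -
  let ?U = "connected_component_set S z" and ?V = "connected_component_set (S - B) z"
  have "?V \<subseteq> ?U" by (rule connected_component_mono) blast
  moreover have "z \<in> ?V" using assms(3) by (simp add: connected_component_refl)
  moreover have "?V \<inter> B = {}" using connected_component_subset[of "S - B" z] by blast
  ultimately have "?U \<inter> ?V \<noteq> {}" "?U - ?V \<noteq> {}" using assms(4) by blast+
  then have "?U \<inter> frontier ?V \<noteq> {}"
    by (rule connected_Int_frontier[OF connected_connected_component])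
  then obtain x where x: "x \<in> ?U" "x \<in> frontier ?V" by blast
  have "frontier ?V \<subseteq> frontier S \<union> frontier B"
    using frontier_of_connected_component_subset[of "S - B" z] frontier_Int_subset[of S "- B"]
    by (simp add: Diff_eq)
  moreover have "x \<notin> frontier S"
    using x(1) connected_component_subset[of S z] assms(1) frontier_disjoint_eq by blast
  ultimately have "x \<in> B" using x(2) assms(2) frontier_subset_closed by blast
  then show thesis using that x frontier_def by blast
qed

lemma exists_non_integer_between:
  assumes "a < (b::real)" obtains t where "a < t" "t < b" "t \<notin> \<int>"
proof -
  define t where "t = (a + min b (of_int \<lfloor>a\<rfloor> + 1)) / 2"
  have t: "a < t" "t < b" "t < of_int \<lfloor>a\<rfloor> + 1"
    using assms by (auto simp: t_def min_def; linarith)+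
  moreover have "t \<notin> \<int>"
  proof
    assume "t \<in> \<int>"
    then obtain m where "t = of_int m" by (auto elim: Ints_cases)
    then have "\<lfloor>a\<rfloor> < m" "m < \<lfloor>a\<rfloor> + 1" using t of_int_floor_le[of a] by linarith+
    then show False by linarith
  qed
  ultimately show thesis using that by blast
qed

lemma finite_int_vec_box: "finite {v :: int ^ 'n::finite. \<forall>j. a j \<le> v $ j \<and> v $ j \<le> b j}"
proof -
  have "{v :: int ^ 'n. \<forall>j. a j \<le> v $ j \<and> v $ j \<le> b j} \<subseteq> vec_lambda ` PiE UNIV (\<lambda>j. {a j..b j})"
    by (auto intro!: image_eqI[where x="vec_nth _"] simp: vec_nth_inverse)
  then show ?thesis by (rule finite_subset) (simp add: finite_PiE)
qed

lemma rtrancl_Image_eq_if_closed: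
  assumes D: "D = R\<^sup>* `` {h}"
    and R_S: "\<And>x y. x \<in> D \<Longrightarrow> (x, y) \<in> R \<Longrightarrow> (x, y) \<in> S"
    and S_closed: "\<And>x y. x \<in> D \<Longrightarrow> (x, y) \<in> S \<Longrightarrow> y \<in> D"
  shows "D = S\<^sup>* `` {h}"
proof
  show "D \<subseteq> S\<^sup>* `` {h}"
  proof
    fix x assume "x \<in> D"
    then have "(h, x) \<in> R\<^sup>*" using D by blast
    then show "x \<in> S\<^sup>* `` {h}"
    proof (induction rule: rtrancl_induct)
      case (step y z)
      then have "y \<in> D" using D by blast
      with step show ?case using R_S by (auto intro: rtrancl_into_rtrancl)
    qed simp
  qed
  show "S\<^sup>* `` {h} \<subseteq> D"
  proof
    fix x assume "x \<in> S\<^sup>* `` {h}"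
    then have "(h, x) \<in> S\<^sup>*" by blast
    then show "x \<in> D" by (induction rule: rtrancl_induct) (use D S_closed in blast)+
  qed
qed

lemma rtrancl_Image_eq_of_sym:
  assumes "sym r" "(a, b) \<in> r\<^sup>*" shows "r\<^sup>* `` {a} = r\<^sup>* `` {b}"
proof -
  have "(b, a) \<in> r\<^sup>*" using assms by (meson sym_rtrancl symD)
  with assms(2) show ?thesis by (blast intro: rtrancl_trans)
qed

section \<open>Insertion tolerance of Bernoulli product measures\<close>

definition bernoulli_product :: "real \<Rightarrow> ('i \<Rightarrow> bool) measure" where
  "bernoulli_product p = PiM UNIV (\<lambda>_. measure_pmf (bernoulli_pmf p))"

definition force_open :: "'i set \<Rightarrow> ('i \<Rightarrow> bool) \<Rightarrow> ('i \<Rightarrow> bool)" where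
  "force_open S \<omega> = (\<lambda>F. F \<in> S \<or> \<omega> F)"

lemma force_open_insert: "force_open (insert F S) \<omega> = fun_upd (force_open S \<omega>) F True"
  by (auto simp: force_open_def)

lemma prob_space_bernoulli_product: "prob_space (bernoulli_product p)"
  unfolding bernoulli_product_def by (intro prob_space_PiM prob_space_measure_pmf)

lemma space_bernoulli_product: "space (bernoulli_product p) = UNIV"
  by (simp add: bernoulli_product_def space_PiM)

text \<open>Split off the coordinate \<open>F\<close>: the product measure is the image of
  \<open>Bernoulli(p) \<otimes> (product over the other coordinates)\<close> under gluing.  The set of
  configurations that land in \<open>N\<close> once \<open>F\<close> is opened has measure \<open>P(slice True)\<close>,
  while \<open>P(N) \<ge> p \<cdot> P(slice True)\<close>.\<close>

lemma null_sets_bernoulli_product_fun_upd_True: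
  fixes p :: real and F :: 'i
  assumes "0 < p" "p \<le> 1" and N: "N \<in> null_sets (bernoulli_product p :: ('i \<Rightarrow> bool) measure)"
  shows "{\<omega>. fun_upd \<omega> F True \<in> N} \<in> null_sets (bernoulli_product p :: ('i \<Rightarrow> bool) measure)"
proof -
  define B where "B = measure_pmf (bernoulli_pmf p)"
  define M where "M = (bernoulli_product p :: ('i \<Rightarrow> bool) measure)"
  define PI where "PI = PiM (UNIV - {F}) (\<lambda>_. B)"
  define glue where "glue = (\<lambda>(x, \<omega>). fun_upd \<omega> F x :: 'i \<Rightarrow> bool)"
  interpret B: prob_space B unfolding B_def by (rule prob_space_measure_pmf)
  interpret PI: prob_space PI unfolding PI_def B_def by (intro prob_space_PiM prob_space_measure_pmf)
  interpret pair_sigma_finite B PI ..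
  have M_split: "M = PiM (insert F (UNIV - {F})) (\<lambda>_. B)"
    by (simp add: M_def B_def bernoulli_product_def insert_absorb)
  have glue_distr: "distr (B \<Otimes>\<^sub>M PI) M glue = M"
    unfolding M_split PI_def glue_def
    by (rule distr_pair_PiM_eq_PiM) (simp_all add: B.prob_space_axioms)
  have glue_meas: "glue \<in> B \<Otimes>\<^sub>M PI \<rightarrow>\<^sub>M M"
    unfolding M_split PI_def glue_def split_beta'
    by (rule measurable_fun_upd[where J="UNIV - {F}"]) auto
  have upd_meas: "(\<lambda>\<omega>. fun_upd \<omega> F x) \<in> PI \<rightarrow>\<^sub>M M" for x
    unfolding M_split PI_def by (rule measurable_fun_upd[where J="UNIV - {F}"]) (auto simp: B_def)
  have upd_True_meas: "(\<lambda>\<omega>. fun_upd \<omega> F True) \<in> M \<rightarrow>\<^sub>M M"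
    unfolding M_split by (rule measurable_fun_upd[where J="insert F (UNIV - {F})"]) (auto simp: B_def)
  have N_sets: "N \<in> sets M" and N_null: "emeasure M N = 0"
    using N by (auto simp: M_def)
  define slice where "slice x = {\<omega> \<in> space PI. fun_upd \<omega> F x \<in> N}" for x
  have slice_sets: "slice x \<in> sets PI" for x
    using measurable_sets[OF upd_meas N_sets] by (simp add: slice_def vimage_def Int_def conj_commute)
  have glue_vimage: "glue -` {\<omega>. fun_upd \<omega> F x \<in> N} \<inter> space (B \<Otimes>\<^sub>M PI) = space B \<times> slice x"
    "Pair x -` (glue -` N \<inter> space (B \<Otimes>\<^sub>M PI)) = slice x" for x
    by (auto simp: slice_def glue_def space_pair_measure B_def)
  have "(\<integral>\<^sup>+x. emeasure PI (slice x) \<partial>B) = emeasure (B \<Otimes>\<^sub>M PI) (glue -` N \<inter> space (B \<Otimes>\<^sub>M PI))"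
    using PI.emeasure_pair_measure_alt[OF measurable_sets[OF glue_meas N_sets]]
    by (simp only: glue_vimage)
  also have "\<dots> = 0"
    using emeasure_distr[OF glue_meas N_sets] glue_distr N_null by simp
  finally have "AE x in B. emeasure PI (slice x) = 0"
    by (subst (asm) nn_integral_0_iff_AE) (auto simp: B_def)
  then have slice_True: "emeasure PI (slice True) = 0"
    unfolding B_def AE_measure_pmf_iff using \<open>0 < p\<close> \<open>p \<le> 1\<close> by (auto simp: set_pmf_iff)
  have sets: "{\<omega>. fun_upd \<omega> F True \<in> N} \<in> sets M"
    using measurable_sets[OF upd_True_meas N_sets] by (simp add: M_def space_bernoulli_product vimage_def)
  have "emeasure M {\<omega>. fun_upd \<omega> F True \<in> N} = emeasure (distr (B \<Otimes>\<^sub>M PI) M glue) {\<omega>. fun_upd \<omega> F True \<in> N}"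
    by (simp only: glue_distr)
  also have "\<dots> = emeasure (B \<Otimes>\<^sub>M PI) (glue -` {\<omega>. fun_upd \<omega> F True \<in> N} \<inter> space (B \<Otimes>\<^sub>M PI))"
    by (rule emeasure_distr[OF glue_meas sets])
  also have "glue -` {\<omega>. fun_upd \<omega> F True \<in> N} \<inter> space (B \<Otimes>\<^sub>M PI) = space B \<times> slice True"
    by (rule glue_vimage)
  also have "emeasure (B \<Otimes>\<^sub>M PI) (space B \<times> slice True) = 0"
    using slice_sets by (simp add: PI.emeasure_pair_measure_Times slice_True)
  finally show ?thesis using sets by (simp add: M_def null_sets_def fun_upd_def)
qed

lemma AE_bernoulli_product_force_open:
  fixes p :: real and S :: "'i set"
  assumes "0 < p" "p \<le> 1" and "finite S" and "AE \<omega> in bernoulli_product p. P \<omega>"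
  shows "AE \<omega> in bernoulli_product p. P (force_open S \<omega>)"
  using \<open>finite S\<close> assms(4)
proof (induction S arbitrary: P rule: finite_induct)
  case empty
  then show ?case by (simp add: force_open_def)
next
  case (insert F S)
  obtain N where N: "{\<omega> \<in> space (bernoulli_product p). \<not> P \<omega>} \<subseteq> N"
      "N \<in> null_sets (bernoulli_product p :: ('i \<Rightarrow> bool) measure)"
    using insert.prems by (auto elim!: AE_E)
  have "AE \<omega> in bernoulli_product p. P (fun_upd \<omega> F True)"
    using N by (intro AE_I'[OF null_sets_bernoulli_product_fun_upd_True[OF \<open>0 < p\<close> \<open>p \<le> 1\<close> N(2)]])
      (auto simp: space_bernoulli_product)
  from insert.IH[OF this] show ?case by (simp add: force_open_insert)
qed

lemma AE_bernoulli_product_0: "AE \<omega> in bernoulli_product 0. \<omega> = (\<lambda>_::'i::countable. False)"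
proof -
  have "AE \<omega> in bernoulli_product 0. \<not> \<omega> F" for F :: 'i
    unfolding bernoulli_product_def
    by (rule AE_PiM_component) (auto simp: prob_space_measure_pmf AE_measure_pmf_iff set_pmf_iff)
  then show ?thesis by (simp add: AE_all_countable fun_eq_iff)
qed

lemma face_perc_eq_bernoulli_product: "face_perc p = bernoulli_product p"
  by (simp add: face_perc_def bernoulli_product_def)

definition unit_cube :: "int ^ 'n::finite \<Rightarrow> (real ^ 'n) set" where
  "unit_cube c = box (\<chi> j. of_int (c $ j)) (\<chi> j. of_int (c $ j) + 1)"

lemma mem_unit_cube: "x \<in> unit_cube c \<longleftrightarrow> (\<forall>j. of_int (c $ j) < x $ j \<and> x $ j < of_int (c $ j) + 1)"
  by (simp add: unit_cube_def mem_box_cart)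

lemma open_unit_cube: "open (unit_cube c)"
  and connected_unit_cube: "connected (unit_cube c)"
  and bounded_unit_cube: "bounded (unit_cube c)"
  by (simp_all add: unit_cube_def open_box convex_connected)

lemma centre_in_unit_cube: "(\<chi> j. of_int (c $ j) + 1/2) \<in> unit_cube c"
  by (simp add: mem_unit_cube)

lemma mem_closure_unit_cube:
  "x \<in> closure (unit_cube c) \<longleftrightarrow> (\<forall>j. of_int (c $ j) \<le> x $ j \<and> x $ j \<le> of_int (c $ j) + 1)"
proof -
  have "unit_cube c \<noteq> {}" using centre_in_unit_cube by blast
  then show ?thesis unfolding unit_cube_def by (subst closure_box) (auto simp: mem_box_cart)
qed

lemma unit_cube_disjoint: "c \<noteq> c' \<Longrightarrow> unit_cube c \<inter> unit_cube c' = {}"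
proof -
  assume "c \<noteq> c'"
  then obtain j where j: "c $ j \<noteq> c' $ j" by (metis vec_eq_iff)
  have "\<not> (of_int (c $ j) < t \<and> t < of_int (c $ j) + 1 \<and> of_int (c' $ j) < t \<and> t < of_int (c' $ j) + (1::real))" for t
    using j by (metis floor_unique less_le)
  then show ?thesis by (force simp: mem_unit_cube)
qed

lemma unit_cube_inj: "unit_cube c = unit_cube c' \<Longrightarrow> c = c'"
  using unit_cube_disjoint[of c c'] centre_in_unit_cube[of c] by auto

lemma mem_face_set: "x \<in> face_set (v, i) \<longleftrightarrow> x $ i = of_int (v $ i) \<and>
   (\<forall>j. j \<noteq> i \<longrightarrow> of_int (v $ j) \<le> x $ j \<and> x $ j \<le> of_int (v $ j) + 1)"
  by (simp add: face_set_def)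

lemma face_set_bounds:
  "x \<in> face_set F \<Longrightarrow> of_int (fst F $ j) \<le> x $ j \<and> x $ j \<le> of_int (fst F $ j) + 1"
  by (cases F; cases "j = snd F") (auto simp: mem_face_set)

lemma closed_face_set: "closed (face_set F)"
  unfolding face_set_def Let_def
  by (intro closed_Collect_conj closed_Collect_all closed_Collect_imp closed_Collect_eq
      closed_Collect_le open_Collect_const continuous_intros)

lemma unit_cube_Int_face_set: "unit_cube c \<inter> face_set F = {}"
proof (cases F)
  case (Pair v i)
  have "\<not> (of_int (c $ i) < t \<and> t < of_int (c $ i) + (1::real) \<and> t = of_int (v $ i))" for t
    by (metis floor_of_int floor_unique less_le)
  then show ?thesis using Pair by (auto simp: mem_unit_cube mem_face_set)
qed

lemma unit_cube_Int_Kset: "unit_cube c \<inter> Kset \<omega> = {}"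
  using unit_cube_Int_face_set by (auto simp: Kset_def)

lemma face_set_subset_frontier_unit_cube:
  shows "face_set (v, i) \<subseteq> frontier (unit_cube v)"
    and "face_set (v, i) \<subseteq> frontier (unit_cube (v - axis i 1))"
proof -
  have "face_set (v, i) \<subseteq> closure (unit_cube v)"
    using face_set_bounds[where F="(v, i)"] by (auto simp: mem_closure_unit_cube)
  moreover have "face_set (v, i) \<subseteq> closure (unit_cube (v - axis i 1))"
    by (auto simp: mem_closure_unit_cube mem_face_set axis_def)
  ultimately show "face_set (v, i) \<subseteq> frontier (unit_cube v)"
    and "face_set (v, i) \<subseteq> frontier (unit_cube (v - axis i 1))"
    using unit_cube_Int_face_set[of v "(v, i)"] unit_cube_Int_face_set[of "v - axis i 1" "(v, i)"]
    by (auto simp: frontier_def interior_open open_unit_cube)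
qed

lemma finite_faces_in_range: "finite {F :: 'n::finite face. \<forall>j. a j \<le> fst F $ j \<and> fst F $ j \<le> b j}"
proof -
  have "{F :: 'n face. \<forall>j. a j \<le> fst F $ j \<and> fst F $ j \<le> b j} =
      {v. \<forall>j. a j \<le> v $ j \<and> v $ j \<le> b j} \<times> UNIV"
    by auto
  then show ?thesis by (simp add: finite_int_vec_box)
qed

lemma closed_Kset: "closed (Kset \<omega>)"
proof -
  have "locally_finite_in euclidean (face_set ` {F. \<omega> F})"
    unfolding locally_finite_in_def
  proof (intro conjI ballI)
    fix x :: "real ^ 'a"
    let ?near = "{F :: 'a face. \<forall>j. \<lfloor>x $ j\<rfloor> - 1 \<le> fst F $ j \<and> fst F $ j \<le> \<lfloor>x $ j\<rfloor> + 1}"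
    have "{U \<in> face_set ` {F. \<omega> F}. U \<inter> ball x 1 \<noteq> {}} \<subseteq> face_set ` ?near"
    proof
      fix U assume "U \<in> {U \<in> face_set ` {F. \<omega> F}. U \<inter> ball x 1 \<noteq> {}}"
      then obtain F y where F: "U = face_set F" "y \<in> face_set F" "y \<in> ball x 1" by blast
      then have near: "\<bar>x $ j - y $ j\<bar> < 1" "of_int (fst F $ j) \<le> y $ j \<and> y $ j \<le> of_int (fst F $ j) + 1"
        for j by (simp_all add: dist_vec_nth_less face_set_bounds)
      have "\<lfloor>x $ j\<rfloor> - 1 \<le> fst F $ j \<and> fst F $ j \<le> \<lfloor>x $ j\<rfloor> + 1" for j
        using near(1)[of j, unfolded abs_diff_less_iff] near(2)[of j] by (intro conjI; linarith)
      then have "F \<in> ?near" by simp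
      then show "U \<in> face_set ` ?near" using F(1) by blast
    qed
    moreover have "finite (face_set ` ?near)" by (intro finite_imageI finite_faces_in_range)
    ultimately show "\<exists>V. openin euclidean V \<and> x \<in> V \<and> finite {U \<in> face_set ` {F. \<omega> F}. U \<inter> V \<noteq> {}}"
      by (intro exI[of _ "ball x 1"]) (auto dest: finite_subset)
  qed simp
  then show ?thesis
    unfolding Kset_def closed_closedin
    by (rule closedin_locally_finite_Union[rotated]) (auto simp: closed_face_set)
qed

lemma open_Compl_Kset: "open (- Kset \<omega>)"
  using closed_Kset by (rule open_Compl)

lemma open_meets_unit_cube_beside_face:
  assumes "open H" "face_set (v, i) \<subseteq> closure H" "H \<inter> face_set (v, i) = {}"
  shows "H \<inter> unit_cube v \<noteq> {} \<or> H \<inter> unit_cube (v - axis i 1) \<noteq> {}"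
proof -
  define c :: "real ^ 'a" where "c = (\<chi> j. of_int (v $ j) + (if j = i then 0 else 1/2))"
  have "c \<in> face_set (v, i)" by (simp add: c_def mem_face_set)
  then obtain y where y: "y \<in> H" "dist y c < 1/2"
    using assms(2) closure_approachable[of c H] by (meson in_mono half_gt_zero_iff zero_less_one)
  have near: "\<bar>y $ j - c $ j\<bar> < 1/2" for j using y(2) by (rule dist_vec_nth_less)
  have other: "of_int (v $ j) < y $ j \<and> y $ j < of_int (v $ j) + 1" if "j \<noteq> i" for j
    using near[of j, unfolded abs_diff_less_iff] that by (simp add: c_def)
  have normal: "of_int (v $ i) - 1 < y $ i \<and> y $ i < of_int (v $ i) + 1"
    using near[of i, unfolded abs_diff_less_iff] by (simp add: c_def)
  have "y $ i \<noteq> of_int (v $ i)"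
  proof
    assume "y $ i = of_int (v $ i)"
    then have "y \<in> face_set (v, i)" using other by (simp add: mem_face_set less_imp_le)
    then show False using y(1) assms(3) by blast
  qed
  then consider "of_int (v $ i) < y $ i" | "y $ i < of_int (v $ i)" by linarith
  then have "y \<in> unit_cube v \<or> y \<in> unit_cube (v - axis i 1)"
  proof cases
    case 1
    have "y \<in> unit_cube v"
      unfolding mem_unit_cube
    proof
      fix j show "of_int (v $ j) < y $ j \<and> y $ j < of_int (v $ j) + 1"
        using 1 normal other[of j] by (cases "j = i") auto
    qed
    then show ?thesis ..
  next
    case 2
    have "y \<in> unit_cube (v - axis i 1)"
      unfolding mem_unit_cube
    proof
      fix j show "of_int ((v - axis i 1) $ j) < y $ j \<and> y $ j < of_int ((v - axis i 1) $ j) + 1"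
        using 2 normal other[of j] by (cases "j = i") (auto simp: axis_def)
    qed
    then show ?thesis ..
  qed
  then show ?thesis using y(1) by blast
qed

section \<open>The box and its skeleton\<close>

definition centered_box :: "int \<Rightarrow> (real ^ 'n::finite) set" where
  "centered_box n = cbox (\<chi> j. - of_int n) (\<chi> j. of_int n)"

lemma mem_centered_box: "x \<in> centered_box n \<longleftrightarrow> (\<forall>j. - of_int n \<le> x $ j \<and> x $ j \<le> of_int n)"
  by (simp add: centered_box_def mem_box_cart)

lemma closed_centered_box: "closed (centered_box n)"
  by (simp add: centered_box_def closed_cbox)

definition box_faces :: "int \<Rightarrow> 'n::finite face set" where
  "box_faces n = {F. \<forall>j. - n \<le> fst F $ j \<and> fst F $ j \<le> (if j = snd F then n else n - 1)}"

lemma finite_box_faces: "finite (box_faces n :: 'n::finite face set)"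
proof -
  have "box_faces n \<subseteq> {F :: 'n face. \<forall>j. - n \<le> fst F $ j \<and> fst F $ j \<le> n}"
  proof
    fix F :: "'n face" assume F: "F \<in> box_faces n"
    have "- n \<le> fst F $ j \<and> fst F $ j \<le> n" for j
    proof -
      have "- n \<le> fst F $ j \<and> fst F $ j \<le> (if j = snd F then n else n - 1)"
        using F by (simp add: box_faces_def)
      then show ?thesis by (simp split: if_splits)
    qed
    then show "F \<in> {F. \<forall>j. - n \<le> fst F $ j \<and> fst F $ j \<le> n}" by simp
  qed
  then show ?thesis
    by (rule finite_subset) (use finite_faces_in_range[of "\<lambda>_. - n" "\<lambda>_. n"] in simp)
qed

definition box_skeleton :: "int \<Rightarrow> (real ^ 'n::finite) set" where
  "box_skeleton n = (\<Union>F\<in>box_faces n. face_set F)"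

lemma Kset_force_open: "Kset (force_open S \<omega>) = Kset \<omega> \<union> (\<Union>F\<in>S. face_set F)"
  by (auto simp: Kset_def force_open_def)

lemma box_skeleton_subset_centered_box: "box_skeleton n \<subseteq> centered_box n"
proof
  fix x assume "x \<in> box_skeleton n"
  then obtain v i where F: "(v, i) \<in> box_faces n" "x \<in> face_set (v, i)"
    by (auto simp: box_skeleton_def)
  have "- of_int n \<le> x $ j \<and> x $ j \<le> of_int n" for j
  proof (cases "j = i")
    case True
    have "- n \<le> v $ i" "v $ i \<le> n" using F(1) by (auto simp: box_faces_def dest: spec[of _ i])
    then show ?thesis using True F(2) by (simp add: mem_face_set)
  next
    case False
    then have "- n \<le> v $ j" "v $ j + 1 \<le> n" using F(1) by (auto simp: box_faces_def dest: spec[of _ j])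
    moreover have "of_int (v $ j) \<le> x $ j \<and> x $ j \<le> of_int (v $ j) + 1"
      using face_set_bounds[OF F(2)] by simp
    ultimately show ?thesis by linarith
  qed
  then show "x \<in> centered_box n" by (simp add: mem_centered_box)
qed

text \<open>The face through \<open>x\<close> is perpendicular to the integral coordinate \<open>i\<close>; in the other
  coordinates its corner is \<open>\<lfloor>x $ j\<rfloor>\<close>, pushed down to \<open>n - 1\<close> when \<open>x $ j = n\<close>.\<close>

lemma integral_coordinate_in_box_skeleton:
  assumes "1 \<le> n" "x \<in> centered_box n" "x $ i \<in> \<int>"
  shows "x \<in> box_skeleton n"
proof -
  define v :: "int ^ 'a" where "v = (\<chi> j. if j = i then \<lfloor>x $ i\<rfloor> else min \<lfloor>x $ j\<rfloor> (n - 1))"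
  have x_bounds: "- of_int n \<le> x $ j \<and> x $ j \<le> of_int n" for j
    using assms(2) by (simp add: mem_centered_box)
  have "- n \<le> \<lfloor>x $ j\<rfloor> \<and> \<lfloor>x $ j\<rfloor> \<le> n" for j
    using x_bounds[of j] by linarith
  then have "(v, i) \<in> box_faces n"
    using assms(1) by (auto simp: box_faces_def v_def)
  moreover have "x $ i = of_int (v $ i)" using assms(3) by (simp add: v_def of_int_floor)
  moreover have "of_int (v $ j) \<le> x $ j \<and> x $ j \<le> of_int (v $ j) + 1" if "j \<noteq> i" for j
  proof (cases "\<lfloor>x $ j\<rfloor> \<le> n - 1")
    case True
    then show ?thesis using that by (simp add: v_def min_def)
  next
    case False
    then have "of_int n \<le> x $ j" by linarith
    then show ?thesis using that False x_bounds[of j] by (simp add: v_def min_def)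
  qed
  ultimately have "x \<in> face_set (v, i)" by (simp add: mem_face_set)
  then show ?thesis using \<open>(v, i) \<in> box_faces n\<close> by (auto simp: box_skeleton_def)
qed

definition cube_in_box :: "int \<Rightarrow> int ^ 'n::finite \<Rightarrow> bool" where
  "cube_in_box n c \<longleftrightarrow> (\<forall>j. - n \<le> c $ j \<and> c $ j < n)"

lemma cube_in_box_imp_pos: "cube_in_box n c \<Longrightarrow> 1 \<le> n"
  unfolding cube_in_box_def by (erule allE[of _ undefined]) linarith

lemma closure_unit_cube_subset_centered_box:
  assumes c: "cube_in_box n c" shows "closure (unit_cube c) \<subseteq> centered_box n"
proof
  fix x assume x: "x \<in> closure (unit_cube c)"
  have "- of_int n \<le> x $ j \<and> x $ j \<le> of_int n" for j
    using x[unfolded mem_closure_unit_cube, rule_format, of j] c[unfolded cube_in_box_def, rule_format, of j]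
    by linarith
  then show "x \<in> centered_box n" by (simp add: mem_centered_box)
qed

lemma unit_cube_Int_centered_box:
  assumes "\<not> cube_in_box n c" shows "unit_cube c \<inter> centered_box n = {}"
proof -
  from assms obtain j where j: "\<not> (- n \<le> c $ j \<and> c $ j < n)" by (auto simp: cube_in_box_def)
  have False if "x \<in> unit_cube c" "x \<in> centered_box n" for x
  proof -
    have "of_int (c $ j) < x $ j" "x $ j < of_int (c $ j) + 1" "- of_int n \<le> x $ j" "x $ j \<le> of_int n"
      using that by (simp_all add: mem_unit_cube mem_centered_box)
    then show False using j by linarith
  qed
  then show ?thesis by blast
qed

lemma frontier_unit_cube_subset_box_skeleton:
  assumes "cube_in_box n c" shows "frontier (unit_cube c) \<subseteq> box_skeleton n"
proof
  fix x assume x: "x \<in> frontier (unit_cube c)"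
  then have "x \<in> closure (unit_cube c)" "x \<notin> unit_cube c"
    by (auto simp: frontier_def interior_open open_unit_cube)
  then obtain j where "\<not> (of_int (c $ j) < x $ j \<and> x $ j < of_int (c $ j) + 1)"
    unfolding mem_unit_cube by blast
  moreover have "of_int (c $ j) \<le> x $ j \<and> x $ j \<le> of_int (c $ j) + 1"
    using \<open>x \<in> closure (unit_cube c)\<close> by (simp add: mem_closure_unit_cube)
  ultimately have "x $ j = of_int (c $ j) \<or> x $ j = of_int (c $ j) + 1" by linarith
  then have "x $ j \<in> \<int>" by (metis Ints_of_int Ints_1 Ints_add)
  then show "x \<in> box_skeleton n"
    using integral_coordinate_in_box_skeleton cube_in_box_imp_pos assms
      closure_unit_cube_subset_centered_box \<open>x \<in> closure (unit_cube c)\<close> by blast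
qed

lemma frontier_centered_box_subset_box_skeleton:
  assumes "1 \<le> n" shows "frontier (centered_box n) \<subseteq> box_skeleton n"
proof
  fix x :: "real ^ 'a" assume "x \<in> frontier (centered_box n)"
  then have "x \<in> centered_box n" "x \<notin> box (\<chi> j. - of_int n) (\<chi> j. of_int n)"
    by (simp_all add: centered_box_def frontier_cbox)
  then obtain j where "\<not> (- of_int n < x $ j \<and> x $ j < of_int n)"
    by (auto simp: mem_box_cart)
  then have "x $ j = - of_int n \<or> x $ j = of_int n"
    using \<open>x \<in> centered_box n\<close> by (auto simp: mem_centered_box dest: spec[of _ j])
  then have "x $ j \<in> \<int>" by (metis Ints_of_int Ints_minus)
  then show "x \<in> box_skeleton n"
    using integral_coordinate_in_box_skeleton[OF assms \<open>x \<in> centered_box n\<close>] by blast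
qed

lemma centered_box_minus_skeleton_in_unit_cube:
  assumes "1 \<le> n" "x \<in> centered_box n" "x \<notin> box_skeleton n"
  obtains c where "cube_in_box n c" "x \<in> unit_cube c"
proof
  have non_integral: "x $ j \<noteq> of_int m" for j m
    using integral_coordinate_in_box_skeleton[OF assms(1,2)] assms(3) by (metis Ints_of_int)
  then have "of_int \<lfloor>x $ j\<rfloor> < x $ j" for j
    by (metis of_int_floor_le order_le_less)
  then show "x \<in> unit_cube (\<chi> j. \<lfloor>x $ j\<rfloor>)"
    by (simp add: mem_unit_cube real_of_int_floor_add_one_gt)
  have "x $ j < of_int n" "- of_int n \<le> x $ j" for j
    using assms(2) non_integral[of j n] by (auto simp: mem_centered_box order_le_less)
  then show "cube_in_box n (\<chi> j. \<lfloor>x $ j\<rfloor>)"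
    by (simp add: cube_in_box_def floor_less_iff le_floor_iff)
qed

lemma closed_segment_Int_centered_box:
  assumes "a $ l = b $ l" "of_int n < \<bar>a $ l\<bar>"
  shows "closed_segment a b \<inter> centered_box n = {}"
proof -
  have "p \<notin> centered_box n" if "p \<in> closed_segment a b" for p
  proof -
    have "\<not> \<bar>p $ l\<bar> \<le> of_int n" using closed_segment_vec_nth_const[OF that assms(1)] assms(2) by simp
    then have "\<not> (- of_int n \<le> p $ l \<and> p $ l \<le> of_int n)" unfolding abs_le_iff by auto
    then show ?thesis unfolding mem_centered_box by blast
  qed
  then show ?thesis by blast
qed

section \<open>Holes after opening the faces of the box\<close>

definition outside_region :: "int \<Rightarrow> ('n::finite face \<Rightarrow> bool) \<Rightarrow> (real ^ 'n) set" where
  "outside_region n \<omega> = - (Kset \<omega> \<union> centered_box n)"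

lemma outside_region_eq_Diff: "outside_region n \<omega> = - Kset \<omega> - centered_box n"
  by (auto simp: outside_region_def)

lemma open_outside_region: "open (outside_region n \<omega>)"
  unfolding outside_region_def Compl_Un
  using open_Compl_Kset closed_centered_box by blast

lemma Kset_force_open_box_faces:
  "Kset (force_open (box_faces n) \<omega>) = Kset \<omega> \<union> box_skeleton n"
  by (simp add: Kset_force_open box_skeleton_def)

lemma unit_cube_subset_Compl_Kset_box_skeleton: "unit_cube c \<subseteq> - (Kset \<omega> \<union> box_skeleton n)"
  using unit_cube_Int_Kset[of c \<omega>] unit_cube_Int_face_set[of c] by (auto simp: box_skeleton_def)

lemma connected_component_unit_cube:
  assumes "cube_in_box n c" "x \<in> unit_cube c"
  shows "connected_component_set (- (Kset \<omega> \<union> box_skeleton n)) x = unit_cube c"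
proof
  show "connected_component_set (- (Kset \<omega> \<union> box_skeleton n)) x \<subseteq> unit_cube c"
    using frontier_unit_cube_subset_box_skeleton[OF assms(1)] assms(2)
    by (intro connected_component_subset_of_frontier_disjoint) auto
  show "unit_cube c \<subseteq> connected_component_set (- (Kset \<omega> \<union> box_skeleton n)) x"
    by (rule connected_component_maximal[OF assms(2) connected_unit_cube
          unit_cube_subset_Compl_Kset_box_skeleton])
qed

lemma connected_component_outside_region:
  assumes "1 \<le> n" "x \<in> outside_region n \<omega>"
  shows "connected_component_set (- (Kset \<omega> \<union> box_skeleton n)) x =
    connected_component_set (outside_region n \<omega>) x"
proof (rule connected_component_intermediate_subset[symmetric])
  have "connected_component_set (- (Kset \<omega> \<union> box_skeleton n)) x \<subseteq> - centered_box n"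
    using frontier_centered_box_subset_box_skeleton[OF assms(1)] assms(2)
    by (intro connected_component_subset_of_frontier_disjoint) (auto simp: outside_region_def)
  then show "connected_component_set (- (Kset \<omega> \<union> box_skeleton n)) x \<subseteq> outside_region n \<omega>"
    using connected_component_subset by (fastforce simp: outside_region_def)
  show "outside_region n \<omega> \<subseteq> - (Kset \<omega> \<union> box_skeleton n)"
    using box_skeleton_subset_centered_box by (auto simp: outside_region_def)
qed

lemma holesE:
  assumes "H \<in> holes \<omega>"
  obtains x where "x \<notin> Kset \<omega>" "H = connected_component_set (- Kset \<omega>) x" "bounded H"
  using assms unfolding holes_def by blast

lemma holesI:
  "x \<notin> Kset \<omega> \<Longrightarrow> H = connected_component_set (- Kset \<omega>) x \<Longrightarrow> bounded H \<Longrightarrow> H \<in> holes \<omega>"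
  unfolding holes_def by blast

lemma open_hole: "H \<in> holes \<omega> \<Longrightarrow> open H"
  by (auto elim!: holesE intro: open_connected_component open_Compl_Kset)

lemma hole_nonempty:
  assumes "H \<in> holes \<omega>" shows "H \<noteq> {}"
proof -
  obtain x where "x \<notin> Kset \<omega>" "H = connected_component_set (- Kset \<omega>) x"
    using assms by (rule holesE)
  then have "x \<in> H" by (simp add: connected_component_refl)
  then show ?thesis by blast
qed

lemma hole_eq_connected_component: "H \<in> holes \<omega> \<Longrightarrow> x \<in> H \<Longrightarrow> H = connected_component_set (- Kset \<omega>) x"
  by (metis holesE connected_component_eq)

lemma holes_force_open_box_faces_cases:
  assumes "1 \<le> n" "H \<in> holes (force_open (box_faces n) \<omega>)"
  obtains c where "cube_in_box n c" "H = unit_cube c"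
  | z where "z \<in> outside_region n \<omega>" "H = connected_component_set (outside_region n \<omega>) z"
proof -
  obtain x where x: "x \<notin> Kset \<omega> \<union> box_skeleton n"
      "H = connected_component_set (- (Kset \<omega> \<union> box_skeleton n)) x"
    using assms(2) by (auto elim!: holesE simp: Kset_force_open_box_faces)
  show thesis
  proof (cases "x \<in> centered_box n")
    case True
    with centered_box_minus_skeleton_in_unit_cube[OF assms(1)] x(1) obtain c
      where "cube_in_box n c" "x \<in> unit_cube c" by blast
    then show thesis using that(1) x(2) connected_component_unit_cube by metis
  next
    case False
    then have "x \<in> outside_region n \<omega>" using x(1) by (simp add: outside_region_def)
    then show thesis using that(2) x(2) connected_component_outside_region[OF assms(1)] by metis
  qed
qed

lemma unit_cube_in_holes_force_open_box_faces:
  assumes "cube_in_box n c" shows "unit_cube c \<in> holes (force_open (box_faces n) \<omega>)"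
proof (rule holesI)
  let ?x = "\<chi> j. of_int (c $ j) + (1/2 :: real)"
  show "?x \<notin> Kset (force_open (box_faces n) \<omega>)"
    using unit_cube_subset_Compl_Kset_box_skeleton[of c \<omega> n] centre_in_unit_cube[of c]
    by (auto simp: Kset_force_open_box_faces)
  show "unit_cube c = connected_component_set (- Kset (force_open (box_faces n) \<omega>)) ?x"
    using connected_component_unit_cube[OF assms centre_in_unit_cube]
    by (simp add: Kset_force_open_box_faces)
qed (rule bounded_unit_cube)

lemma outside_component_in_holes_force_open_box_faces:
  assumes "1 \<le> n" "z \<in> outside_region n \<omega>" "bounded (connected_component_set (outside_region n \<omega>) z)"
  shows "connected_component_set (outside_region n \<omega>) z \<in> holes (force_open (box_faces n) \<omega>)"
proof (rule holesI[OF _ _ assms(3)])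
  show "z \<notin> Kset (force_open (box_faces n) \<omega>)"
    using assms(2) box_skeleton_subset_centered_box
    by (auto simp: outside_region_def Kset_force_open_box_faces)
  show "connected_component_set (outside_region n \<omega>) z =
      connected_component_set (- Kset (force_open (box_faces n) \<omega>)) z"
    using connected_component_outside_region[OF assms(1,2)] by (simp add: Kset_force_open_box_faces)
qed

lemma hole_outside_box_eq_outside_component:
  assumes "H \<in> holes \<omega>" "H \<inter> centered_box n = {}" "z \<in> H"
  shows "z \<in> outside_region n \<omega>" "H = connected_component_set (outside_region n \<omega>) z"
proof -
  have H: "H = connected_component_set (- Kset \<omega>) z"
    using hole_eq_connected_component assms(1,3) by blast
  then have "H \<subseteq> outside_region n \<omega>"
    using assms(2) connected_component_subset by (fastforce simp: outside_region_def)
  then show "z \<in> outside_region n \<omega>" using assms(3) by blast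
  show "H = connected_component_set (outside_region n \<omega>) z"
    unfolding H using \<open>H \<subseteq> outside_region n \<omega>\<close> H
    by (intro connected_component_intermediate_subset[symmetric]) (auto simp: outside_region_def)
qed

lemma hole_outside_box_in_holes_force_open_box_faces:
  assumes "1 \<le> n" "H \<in> holes \<omega>" "H \<inter> centered_box n = {}"
  shows "H \<in> holes (force_open (box_faces n) \<omega>)"
proof -
  obtain z where "z \<in> H" using assms(2) by (auto elim!: holesE intro: connected_component_refl)
  with hole_outside_box_eq_outside_component[OF assms(2,3)] show ?thesis
    using outside_component_in_holes_force_open_box_faces[OF assms(1)] assms(2)
    by (metis holesE)
qed

text \<open>The point \<open>y\<close> keeps the coordinate in which \<open>z\<close> leaves the box and moves all other
  coordinates to non-integral values strictly inside the box, so that \<open>y\<close> lies in an outer unit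
  cube sharing a face with the box rather than in one beyond an edge or corner of the box.\<close>

lemma point_beside_box_face:
  fixes x z :: "real ^ 'n::finite"
  assumes "1 \<le> n" "x \<in> centered_box n" "z \<notin> centered_box n"
    "dist z x < r / of_nat CARD('n)" "r \<le> 1/2"
  obtains y l where "y $ l = z $ l" "of_int n < \<bar>y $ l\<bar>" "\<bar>y $ l\<bar> < of_int n + 1"
    "\<And>j. j \<noteq> l \<Longrightarrow> \<bar>y $ j\<bar> < of_int n \<and> y $ j \<notin> \<int>" "dist y x \<le> r" "dist z x \<le> r"
proof -
  define \<eta> where "\<eta> = r / of_nat CARD('n)"
  have card: "(1::real) \<le> of_nat CARD('n)" using card_gt_0_iff[of "UNIV :: 'n set"] by simp
  have "0 < \<eta>" using assms(4) zero_le_dist[of z x] unfolding \<eta>_def[symmetric] by linarith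
  then have "0 < r" using card by (simp add: \<eta>_def zero_less_divide_iff)
  then have "\<eta> \<le> r" using card by (simp add: \<eta>_def divide_le_eq mult_le_cancel_left1)
  have x_bounds: "- of_int n \<le> x $ j \<and> x $ j \<le> of_int n" for j
    using assms(2) by (simp add: mem_centered_box)
  obtain l where l: "\<not> (- of_int n \<le> z $ l \<and> z $ l \<le> of_int n)"
    using assms(3) by (auto simp: mem_centered_box)
  have zx: "\<bar>z $ j - x $ j\<bar> < \<eta>" for j using assms(4) unfolding \<eta>_def[symmetric] by (rule dist_vec_nth_less)
  have "\<exists>t. max (x $ j - \<eta>) (- of_int n) < t \<and> t < min (x $ j + \<eta>) (of_int n) \<and> t \<notin> \<int>" for j
  proof -
    have "max (x $ j - \<eta>) (- of_int n) < min (x $ j + \<eta>) (of_int n)"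
      using x_bounds[of j] \<open>0 < \<eta>\<close> assms(1) by simp
    then show ?thesis by (blast elim: exists_non_integer_between)
  qed
  then obtain t where t: "\<And>j. max (x $ j - \<eta>) (- of_int n) < t j \<and> t j < min (x $ j + \<eta>) (of_int n) \<and> t j \<notin> \<int>"
    by metis
  define y where "y = (\<chi> j. if j = l then z $ l else t j)"
  have "\<bar>(y - x) $ j\<bar> \<le> \<eta>" for j
    using zx[of j] t[of j] by (auto simp: y_def)
  then have "norm (y - x) \<le> of_nat CARD('n) * \<eta>"
    using norm_le_l1_cart[of "y - x"] sum_mono[of UNIV "\<lambda>j. \<bar>(y - x) $ j\<bar>" "\<lambda>_. \<eta>"] by simp
  moreover have "of_nat CARD('n) * \<eta> = r" using card by (simp add: \<eta>_def)
  moreover have "of_int n < \<bar>y $ l\<bar> \<and> \<bar>y $ l\<bar> < of_int n + 1"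
    using zx[of l] x_bounds[of l] l \<open>\<eta> \<le> r\<close> assms(5) by (auto simp: y_def abs_if)
  moreover have "\<bar>y $ j\<bar> < of_int n \<and> y $ j \<notin> \<int>" if "j \<noteq> l" for j
    using t[of j] that by (auto simp: y_def abs_less_iff)
  moreover have "dist z x \<le> r" using assms(4) \<open>\<eta> \<le> r\<close> unfolding \<eta>_def[symmetric] by linarith
  ultimately show thesis using that[of y l] by (simp add: y_def dist_norm)
qed

lemma outer_unit_cube_at_box_face:
  assumes "1 \<le> n" "of_int n < \<bar>y $ l\<bar>" "\<bar>y $ l\<bar> < of_int n + 1"
    and "\<And>j. j \<noteq> l \<Longrightarrow> \<bar>y $ j\<bar> < of_int n \<and> y $ j \<notin> \<int>"
  obtains c c' G where "y \<in> unit_cube c" "\<not> cube_in_box n c" "cube_in_box n c'" "G \<in> box_faces n"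
    "face_set G \<subseteq> frontier (unit_cube c)" "face_set G \<subseteq> frontier (unit_cube c')"
proof -
  define v where "v = (\<chi> j. if j = l then (if 0 < y $ l then n else - n) else \<lfloor>y $ j\<rfloor>)"
  have other: "- n \<le> v $ j \<and> v $ j < n \<and> of_int (v $ j) < y $ j \<and> y $ j < of_int (v $ j) + 1"
    if "j \<noteq> l" for j
  proof -
    have "of_int \<lfloor>y $ j\<rfloor> \<noteq> y $ j" using assms(4)[OF that] Ints_of_int by metis
    then have "of_int \<lfloor>y $ j\<rfloor> < y $ j" using of_int_floor_le[of "y $ j"] by linarith
    moreover have "\<bar>y $ j\<bar> < of_int n" using assms(4)[OF that] by blast
    moreover have "v $ j = \<lfloor>y $ j\<rfloor>" using that by (simp add: v_def)
    ultimately show ?thesis unfolding abs_less_iff by (intro conjI) linarith+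
  qed
  have G: "(v, l) \<in> box_faces n"
    using other assms(1) by (auto simp: box_faces_def v_def less_imp_le)
  show thesis
  proof (cases "0 < y $ l")
    case True
    have "y \<in> unit_cube v" "\<not> cube_in_box n v" "cube_in_box n (v - axis l 1)"
      using True assms(2,3) other assms(1)
      by (auto simp: mem_unit_cube cube_in_box_def v_def axis_def)
    then show thesis using that G face_set_subset_frontier_unit_cube by blast
  next
    case False
    have "y \<in> unit_cube (v - axis l 1)" "\<not> cube_in_box n (v - axis l 1)" "cube_in_box n v"
      using False assms(2,3) other assms(1)
      by (auto simp: mem_unit_cube cube_in_box_def v_def axis_def)
    then show thesis using that G face_set_subset_frontier_unit_cube by blast
  qed
qed

lemma outside_component_adjacent_to_box_cube:
  fixes \<omega> :: "'n::finite face \<Rightarrow> bool"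
  assumes n: "1 \<le> n" and z: "z \<in> outside_region n \<omega>"
    and meets: "connected_component_set (- Kset \<omega>) z \<inter> centered_box n \<noteq> {}"
  obtains c G where "cube_in_box n c"
    "face_set G \<subseteq> frontier (connected_component_set (outside_region n \<omega>) z)"
    "face_set G \<subseteq> frontier (unit_cube c)"
proof -
  let ?V = "connected_component_set (outside_region n \<omega>) z"
  have V_out: "?V \<subseteq> outside_region n \<omega>" by (rule connected_component_subset)
  have V_eq: "connected_component_set (outside_region n \<omega>) p = ?V" if "p \<in> ?V" for p
    using that by (rule connected_component_eq)
  obtain x where x: "x \<notin> Kset \<omega>" "x \<in> centered_box n" "x \<in> closure ?V"
    using component_closure_meets_removed_closed_set[OF open_Compl_Kset closed_centered_box _ meets]
      z connected_component_subset[of "- Kset \<omega>" z]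
    unfolding outside_region_eq_Diff by blast
  obtain \<rho> where \<rho>: "0 < \<rho>" "ball x \<rho> \<subseteq> - Kset \<omega>"
    using open_Compl_Kset[of \<omega>] x(1) open_contains_ball by blast
  define r where "r = min \<rho> 1 / 2"
  have r: "0 < r / of_nat CARD('n)" "r \<le> 1/2" "cball x r \<subseteq> ball x \<rho>"
    using \<rho>(1) by (auto simp: r_def)
  obtain w where w: "w \<in> ?V" "dist w x < r / of_nat CARD('n)"
    using x(3) r(1) closure_approachable by blast
  have "w \<notin> centered_box n" using w(1) V_out by (auto simp: outside_region_def)
  then obtain y l where y: "y $ l = w $ l" "of_int n < \<bar>y $ l\<bar>" "\<bar>y $ l\<bar> < of_int n + 1"
      "\<And>j. j \<noteq> l \<Longrightarrow> \<bar>y $ j\<bar> < of_int n \<and> y $ j \<notin> \<int>" "dist y x \<le> r" "dist w x \<le> r"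
    using point_beside_box_face[OF n x(2) _ w(2) r(2)] by blast
  have "closed_segment w y \<subseteq> cball x r"
    using y(5,6) by (intro closed_segment_subset convex_cball) (auto simp: dist_commute)
  moreover have "closed_segment w y \<inter> centered_box n = {}"
    using y(1,2) by (intro closed_segment_Int_centered_box) simp_all
  ultimately have "closed_segment w y \<subseteq> outside_region n \<omega>"
    using r(3) \<rho>(2) unfolding outside_region_def by blast
  then have "y \<in> ?V"
    using connected_component_maximal[OF ends_in_segment(1) connected_segment] V_eq[OF w(1)] by blast
  obtain c c' G where c: "y \<in> unit_cube c" "\<not> cube_in_box n c" "cube_in_box n c'" "G \<in> box_faces n"
      "face_set G \<subseteq> frontier (unit_cube c)" "face_set G \<subseteq> frontier (unit_cube c')"
    using outer_unit_cube_at_box_face[OF n y(2,3,4)] by blast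
  have "unit_cube c \<subseteq> outside_region n \<omega>"
    using unit_cube_Int_Kset[of c \<omega>] unit_cube_Int_centered_box[OF c(2)] by (auto simp: outside_region_def)
  then have "unit_cube c \<subseteq> ?V"
    using connected_component_maximal[OF c(1) connected_unit_cube] V_eq[OF \<open>y \<in> ?V\<close>] by blast
  then have "face_set G \<subseteq> closure ?V"
    using c(5) closure_mono unfolding frontier_def by blast
  moreover have "face_set G \<inter> ?V = {}"
    using c(4) V_out box_skeleton_subset_centered_box
    by (fastforce simp: box_skeleton_def outside_region_def)
  ultimately have "face_set G \<subseteq> frontier ?V"
    by (rule subset_frontier_open[OF open_connected_component[OF open_outside_region]])
  then show thesis using that c(3,6) by blast
qed

section \<open>Components of the hole graph\<close>

lemma hole_edges_iff:
  "(H1, H2) \<in> hole_edges \<omega> \<longleftrightarrow> H1 \<in> holes \<omega> \<and> H2 \<in> holes \<omega> \<and> H1 \<noteq> H2 \<and>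
     (\<exists>F. face_set F \<subseteq> frontier H1 \<and> face_set F \<subseteq> frontier H2)"
  by (simp add: hole_edges_def)

lemma hole_edges_transfer:
  "(H1, H2) \<in> hole_edges \<omega> \<Longrightarrow> H1 \<in> holes \<omega>' \<Longrightarrow> H2 \<in> holes \<omega>' \<Longrightarrow> (H1, H2) \<in> hole_edges \<omega>'"
  by (simp add: hole_edges_def)

lemma sym_hole_edges: "sym (hole_edges \<omega>)"
  unfolding sym_def hole_edges_def by blast

lemma hole_components_iff:
  "C \<in> hole_components \<omega> \<longleftrightarrow> (\<exists>H \<in> holes \<omega>. C = (hole_edges \<omega>)\<^sup>* `` {H})"
  by (auto simp: hole_components_def quotient_def)

lemma rtrancl_hole_edges_holes:
  "(H, H') \<in> (hole_edges \<omega>)\<^sup>* \<Longrightarrow> H \<in> holes \<omega> \<Longrightarrow> H' \<in> holes \<omega>"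
  by (induction rule: rtrancl_induct) (auto simp: hole_edges_iff)

lemma unit_cube_neq_if_disjoint_centered_box:
  "cube_in_box n c \<Longrightarrow> X \<inter> centered_box n = {} \<Longrightarrow> X \<noteq> unit_cube c"
  using closure_unit_cube_subset_centered_box closure_subset centre_in_unit_cube by blast

lemma outside_component_edge_to_box_cube:
  assumes "1 \<le> n" "z \<in> outside_region n \<omega>"
    "connected_component_set (- Kset \<omega>) z \<inter> centered_box n \<noteq> {}"
    "connected_component_set (outside_region n \<omega>) z \<in> holes (force_open (box_faces n) \<omega>)"
  obtains c where "cube_in_box n c"
    "(connected_component_set (outside_region n \<omega>) z, unit_cube c) \<in> hole_edges (force_open (box_faces n) \<omega>)"
proof -
  obtain c G where c: "cube_in_box n c"
      "face_set G \<subseteq> frontier (connected_component_set (outside_region n \<omega>) z)"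
      "face_set G \<subseteq> frontier (unit_cube c)"
    using outside_component_adjacent_to_box_cube[OF assms(1-3)] by blast
  have "connected_component_set (outside_region n \<omega>) z \<inter> centered_box n = {}"
    using connected_component_subset[of "outside_region n \<omega>" z] by (auto simp: outside_region_def)
  then have "(connected_component_set (outside_region n \<omega>) z, unit_cube c) \<in> hole_edges (force_open (box_faces n) \<omega>)"
    unfolding hole_edges_iff using c assms(4) unit_cube_in_holes_force_open_box_faces[OF c(1)]
      unit_cube_neq_if_disjoint_centered_box[OF c(1)] by blast
  then show thesis using that c(1) by blast
qed

lemma hole_force_open_box_faces_away_from_box:
  assumes "1 \<le> n" "X \<in> holes (force_open (box_faces n) \<omega>)"
    and away: "\<And>c. cube_in_box n c \<Longrightarrow> X \<noteq> unit_cube c \<and> (X, unit_cube c) \<notin> hole_edges (force_open (box_faces n) \<omega>)"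
  shows "X \<in> holes \<omega>" "X \<inter> centered_box n = {}"
proof -
  obtain z where z: "z \<in> outside_region n \<omega>" "X = connected_component_set (outside_region n \<omega>) z"
    using holes_force_open_box_faces_cases[OF assms(1,2)] away by metis
  let ?U = "connected_component_set (- Kset \<omega>) z"
  have "?U \<inter> centered_box n = {}"
    using outside_component_edge_to_box_cube[OF assms(1) z(1)] assms(2) z(2) away by metis
  then have "?U \<subseteq> outside_region n \<omega>"
    using connected_component_subset[of "- Kset \<omega>" z] by (auto simp: outside_region_def)
  then have "X = ?U"
    unfolding z(2) by (rule connected_component_intermediate_subset) (auto simp: outside_region_def)
  moreover have "bounded X" using assms(2) by (auto elim: holesE)
  moreover have "z \<notin> Kset \<omega>" using z(1) by (simp add: outside_region_def)
  ultimately show "X \<in> holes \<omega>" by (auto intro: holesI)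
  show "X \<inter> centered_box n = {}"
    using z(2) connected_component_subset[of "outside_region n \<omega>" z] by (auto simp: outside_region_def)
qed

lemma hole_edge_unit_cube_beside_face:
  assumes "(X, Y) \<in> hole_edges \<omega>"
  obtains F q where "face_set F \<subseteq> frontier X" "face_set F \<subseteq> frontier (unit_cube q)"
    "unit_cube q \<subseteq> Y" "Y \<inter> face_set F = {}"
proof -
  obtain v i where F: "face_set (v, i) \<subseteq> frontier X" "face_set (v, i) \<subseteq> frontier Y"
    and Y: "Y \<in> holes \<omega>"
    using assms by (auto simp: hole_edges_iff)
  have Y_open: "open Y" using Y by (rule open_hole)
  have "face_set (v, i) \<subseteq> closure Y" "Y \<inter> face_set (v, i) = {}"
    using F(2) interior_open[OF Y_open] by (auto simp: frontier_def)
  then obtain q where q: "Y \<inter> unit_cube q \<noteq> {}" "face_set (v, i) \<subseteq> frontier (unit_cube q)"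
    using open_meets_unit_cube_beside_face[OF Y_open] face_set_subset_frontier_unit_cube by metis
  then obtain y where y: "y \<in> Y" "y \<in> unit_cube q" by blast
  have "unit_cube q \<subseteq> - Kset \<omega>" using unit_cube_Int_Kset[of q \<omega>] by blast
  then have "unit_cube q \<subseteq> Y"
    using connected_component_maximal[OF y(2) connected_unit_cube] hole_eq_connected_component[OF Y y(1)]
    by blast
  then show thesis using that F(1) q(2) \<open>Y \<inter> face_set (v, i) = {}\<close> by blast
qed

lemma hole_edge_into_box_reaches_box_cube:
  assumes "1 \<le> n" "X \<in> holes \<omega>" "X \<inter> centered_box n = {}" "(X, Y) \<in> hole_edges \<omega>"
    "Y \<inter> centered_box n \<noteq> {}"
  obtains c where "cube_in_box n c" "(X, unit_cube c) \<in> (hole_edges (force_open (box_faces n) \<omega>))\<^sup>*"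
proof -
  let ?\<omega>' = "force_open (box_faces n) \<omega>"
  have X': "X \<in> holes ?\<omega>'" by (rule hole_outside_box_in_holes_force_open_box_faces[OF assms(1-3)])
  have Y: "Y \<in> holes \<omega>" "X \<noteq> Y" using assms(4) by (auto simp: hole_edges_iff)
  obtain F q where F: "face_set F \<subseteq> frontier X" "face_set F \<subseteq> frontier (unit_cube q)"
      "unit_cube q \<subseteq> Y" "Y \<inter> face_set F = {}"
    by (rule hole_edge_unit_cube_beside_face[OF assms(4)])
  define y where "y = (\<chi> j. of_int (q $ j) + (1/2 :: real))"
  have y: "y \<in> unit_cube q" unfolding y_def by (rule centre_in_unit_cube)
  have Y_eq: "Y = connected_component_set (- Kset \<omega>) y"
    using hole_eq_connected_component[OF Y(1)] F(3) y by blast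
  show thesis
  proof (cases "cube_in_box n q")
    case True
    then have "(X, unit_cube q) \<in> hole_edges ?\<omega>'"
      unfolding hole_edges_iff using X' F(1,2) unit_cube_in_holes_force_open_box_faces[OF True]
        unit_cube_neq_if_disjoint_centered_box[OF True assms(3)] by blast
    then show thesis using that True by blast
  next
    case False
    let ?V = "connected_component_set (outside_region n \<omega>) y"
    have q_out: "unit_cube q \<subseteq> outside_region n \<omega>"
      using unit_cube_Int_Kset[of q \<omega>] unit_cube_Int_centered_box[OF False] by (auto simp: outside_region_def)
    then have y_out: "y \<in> outside_region n \<omega>" and q_V: "unit_cube q \<subseteq> ?V"
      using y connected_component_maximal[OF y connected_unit_cube] by blast+
    have V_Y: "?V \<subseteq> Y"
      unfolding Y_eq by (rule connected_component_mono) (auto simp: outside_region_def)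
    have F_V: "face_set F \<subseteq> frontier ?V"
      using F(2,4) q_V V_Y closure_mono[of "unit_cube q" ?V]
      by (intro subset_frontier_open[OF open_connected_component[OF open_outside_region]])
        (auto simp: frontier_def)
    have V': "?V \<in> holes ?\<omega>'"
      using outside_component_in_holes_force_open_box_faces[OF assms(1) y_out] V_Y Y(1)
      by (auto elim!: holesE intro: bounded_subset)
    have "X \<noteq> ?V"
    proof
      assume "X = ?V"
      then have "y \<in> X" using y_out by (simp add: connected_component_refl)
      then show False using hole_eq_connected_component[OF assms(2)] Y_eq Y(2) by simp
    qed
    then have XV: "(X, ?V) \<in> hole_edges ?\<omega>'"
      unfolding hole_edges_iff using X' V' F(1) F_V by blast
    obtain c where c: "cube_in_box n c" "(?V, unit_cube c) \<in> hole_edges ?\<omega>'"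
      using outside_component_edge_to_box_cube[OF assms(1) y_out _ V'] assms(5) Y_eq by metis
    have "(X, unit_cube c) \<in> (hole_edges ?\<omega>')\<^sup>*"
      using XV c(2) by (meson converse_rtrancl_into_rtrancl r_into_rtrancl)
    then show thesis using that c(1) by blast
  qed
qed

lemma box_cube_edge:
  assumes "cube_in_box n c" "cube_in_box n (c - axis j 1)"
  shows "(unit_cube c, unit_cube (c - axis j 1)) \<in> hole_edges (force_open (box_faces n) \<omega>)"
proof -
  have "c \<noteq> c - axis j 1" by (simp add: vec_eq_iff axis_def)
  then show ?thesis
    using assms face_set_subset_frontier_unit_cube[of c j] unit_cube_inj[of c "c - axis j 1"]
    by (auto simp: hole_edges_iff unit_cube_in_holes_force_open_box_faces)
qed

lemma box_cube_reaches_corner_cube: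
  assumes "cube_in_box n c"
  shows "(unit_cube c, unit_cube (\<chi> _. - n)) \<in> (hole_edges (force_open (box_faces n) \<omega>))\<^sup>*"
  using assms
proof (induction "\<Sum>j\<in>UNIV. nat (c $ j + n)" arbitrary: c rule: less_induct)
  case less
  show ?case
  proof (cases "c = (\<chi> _. - n)")
    case False
    then obtain j where "c $ j \<noteq> - n" by (auto simp: vec_eq_iff)
    moreover have "- n \<le> c $ j" using less.prems by (simp add: cube_in_box_def)
    ultimately have j: "- n < c $ j" by simp
    define c' where "c' = c - axis j 1"
    have bounds: "- n \<le> c $ i \<and> c $ i < n" for i using less.prems by (simp add: cube_in_box_def)
    have c': "cube_in_box n c'"
      unfolding cube_in_box_def
    proof
      fix i show "- n \<le> c' $ i \<and> c' $ i < n"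
        using bounds[of i] j by (cases "i = j") (simp_all add: c'_def axis_def)
    qed
    have "(\<Sum>i\<in>UNIV. nat (c' $ i + n)) < (\<Sum>i\<in>UNIV. nat (c $ i + n))"
      using j by (intro sum_strict_mono_ex1) (auto simp: c'_def axis_def)
    then have "(unit_cube c', unit_cube (\<chi> _. - n)) \<in> (hole_edges (force_open (box_faces n) \<omega>))\<^sup>*"
      using less.hyps c' by blast
    moreover have "(unit_cube c, unit_cube c') \<in> hole_edges (force_open (box_faces n) \<omega>)"
      unfolding c'_def using box_cube_edge less.prems c' by (simp add: c'_def)
    ultimately show ?thesis by (rule converse_rtrancl_into_rtrancl[rotated])
  qed simp
qed

lemma box_cubes_connected:
  assumes "cube_in_box n c" "cube_in_box n c'"
  shows "(unit_cube c, unit_cube c') \<in> (hole_edges (force_open (box_faces n) \<omega>))\<^sup>*"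
  using box_cube_reaches_corner_cube[OF assms(1)] box_cube_reaches_corner_cube[OF assms(2)]
    sym_rtrancl[OF sym_hole_edges] by (meson rtrancl_trans symD)

text \<open>A component of the modified hole graph that contains no cube of the box consists of holes
  of \<open>\<omega>\<close> outside the box and is closed under adjacency in \<open>\<omega>\<close>, so it is a component of the
  hole graph of \<open>\<omega>\<close> that misses the box.\<close>

lemma infinite_component_force_open_box_faces_has_box_cube:
  assumes n: "1 \<le> n"
    and meets: "\<And>C. C \<in> hole_components \<omega> \<Longrightarrow> infinite C \<Longrightarrow> \<exists>H\<in>C. H \<inter> centered_box n \<noteq> {}"
    and D: "D \<in> hole_components (force_open (box_faces n) \<omega>)" "infinite D"
  obtains c where "cube_in_box n c" "unit_cube c \<in> D"
proof (rule ccontr)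
  let ?E' = "hole_edges (force_open (box_faces n) \<omega>)" and ?E = "hole_edges \<omega>"
  note box_cube_in_D = that
  assume "\<not> thesis"
  then have no_cube: "unit_cube c \<notin> D" if "cube_in_box n c" for c using that box_cube_in_D by blast
  obtain H0 where H0: "H0 \<in> holes (force_open (box_faces n) \<omega>)" "D = ?E'\<^sup>* `` {H0}"
    using D(1) by (auto simp: hole_components_iff)
  have reach: "Y \<in> D" if "X \<in> D" "(X, Y) \<in> ?E'\<^sup>*" for X Y
    using that H0(2) by (blast intro: rtrancl_trans)
  have away: "X \<in> holes \<omega> \<and> X \<inter> centered_box n = {}" if "X \<in> D" for X
  proof -
    have "X \<in> holes (force_open (box_faces n) \<omega>)"
      using that H0 rtrancl_hole_edges_holes by blast
    moreover have "X \<noteq> unit_cube c \<and> (X, unit_cube c) \<notin> ?E'" if "cube_in_box n c" for c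
      using no_cube[OF that] reach[OF \<open>X \<in> D\<close>] \<open>X \<in> D\<close> by blast
    ultimately show ?thesis using hole_force_open_box_faces_away_from_box[OF n] by blast
  qed
  have closed: "Y \<in> D" if XD: "X \<in> D" and XY: "(X, Y) \<in> ?E" for X Y
  proof (cases "Y \<inter> centered_box n = {}")
    case True
    moreover have "Y \<in> holes \<omega>" using XY by (simp add: hole_edges_iff)
    ultimately have "(X, Y) \<in> ?E'"
      using hole_edges_transfer[OF XY] hole_outside_box_in_holes_force_open_box_faces[OF n]
        away[OF XD] by blast
    then show ?thesis using reach[OF XD] by blast
  next
    case False
    then obtain c where "cube_in_box n c" "(X, unit_cube c) \<in> ?E'\<^sup>*"
      using hole_edge_into_box_reaches_box_cube[OF n _ _ XY] away[OF XD] by metis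
    then show ?thesis using reach[OF XD] no_cube by blast
  qed
  have "(X, Y) \<in> ?E" if "X \<in> D" "(X, Y) \<in> ?E'" for X Y
    using hole_edges_transfer[OF that(2)] away[OF that(1)] away[OF reach[OF that(1) r_into_rtrancl[OF that(2)]]]
    by blast
  then have "D = ?E\<^sup>* `` {H0}"
    using closed by (rule rtrancl_Image_eq_if_closed[OF H0(2)])
  moreover have "H0 \<in> D" using H0(2) by blast
  ultimately have "D \<in> hole_components \<omega>" using away by (auto simp: hole_components_iff)
  then show False using meets D(2) away by blast
qed

lemma N_inf_force_open_box_faces_le_1:
  assumes n: "1 \<le> n"
    and meets: "\<And>C. C \<in> hole_components \<omega> \<Longrightarrow> infinite C \<Longrightarrow> \<exists>H\<in>C. H \<inter> centered_box n \<noteq> {}"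
  shows "N_inf (force_open (box_faces n) \<omega>) \<le> 1"
proof -
  let ?E' = "hole_edges (force_open (box_faces n) \<omega>)"
  let ?S = "{C \<in> hole_components (force_open (box_faces n) \<omega>). infinite C}"
  have corner: "cube_in_box n (\<chi> _. - n)" using n by (simp add: cube_in_box_def)
  have "C = ?E'\<^sup>* `` {unit_cube (\<chi> _. - n)}" if "C \<in> ?S" for C
  proof -
    have C: "C \<in> hole_components (force_open (box_faces n) \<omega>)" "infinite C" using that by simp_all
    obtain c where c: "cube_in_box n c" "unit_cube c \<in> C"
      by (rule infinite_component_force_open_box_faces_has_box_cube[OF n meets C])
    obtain H where H: "C = ?E'\<^sup>* `` {H}" using C(1) by (auto simp: hole_components_iff)
    have "(H, unit_cube c) \<in> ?E'\<^sup>*" using c(2) H by blast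
    then have "(H, unit_cube (\<chi> _. - n)) \<in> ?E'\<^sup>*"
      using box_cubes_connected[OF c(1) corner] by (rule rtrancl_trans)
    then show ?thesis unfolding H by (rule rtrancl_Image_eq_of_sym[OF sym_hole_edges])
  qed
  then have S: "?S \<subseteq> {?E'\<^sup>* `` {unit_cube (\<chi> _. - n)}}" by blast
  then have "finite ?S" by (rule finite_subset) simp
  moreover have "card ?S \<le> 1" using card_mono[OF _ S] by simp
  ultimately show ?thesis by (simp add: N_inf_def one_enat_def)
qed

lemma infinite_hole_components_meet_centered_box:
  assumes "N_inf \<omega> = enat k"
  obtains n where "1 \<le> n" "\<And>C. C \<in> hole_components \<omega> \<Longrightarrow> infinite C \<Longrightarrow> \<exists>H\<in>C. H \<inter> centered_box n \<noteq> {}"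
proof -
  let ?S = "{C \<in> hole_components \<omega>. infinite C}"
  have "finite ?S" using assms by (auto simp: N_inf_def Let_def split: if_splits)
  have "\<exists>p. \<exists>H\<in>C. p \<in> H" if "C \<in> ?S" for C
  proof -
    have "C \<noteq> {}" using that by auto
    then obtain H where "H \<in> C" by blast
    moreover have "H \<in> holes \<omega>"
      using that \<open>H \<in> C\<close> rtrancl_hole_edges_holes by (fastforce simp: hole_components_iff)
    ultimately show ?thesis using hole_nonempty by blast
  qed
  then obtain f where f: "\<And>C. C \<in> ?S \<Longrightarrow> \<exists>H\<in>C. f C \<in> H" by metis
  obtain a where a: "\<And>p. p \<in> f ` ?S \<Longrightarrow> norm p \<le> a"
    using finite_imp_bounded[OF finite_imageI[OF \<open>finite ?S\<close>, of f]] unfolding bounded_iff by blast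
  define n where "n = max 1 \<lceil>a\<rceil>"
  have "f C \<in> centered_box n" if "C \<in> ?S" for C
  proof -
    have "norm (f C) \<le> a" using a that by blast
    moreover have "a \<le> of_int n"
      unfolding n_def by (metis le_of_int_ceiling max.cobounded2 of_int_le_iff order_trans)
    ultimately have "\<bar>f C $ j\<bar> \<le> of_int n" for j
      using component_le_norm_cart[of "f C" j] by linarith
    then show ?thesis by (simp add: mem_centered_box abs_le_iff minus_le_iff)
  qed
  then show thesis using that[of n] f by (fastforce simp: n_def)
qed

lemma N_inf_all_closed: "N_inf (\<lambda>_::'n::finite face. False) = 0"
proof -
  have "holes (\<lambda>_::'n face. False) = {}"
    by (auto simp: holes_def Kset_def connected_component_UNIV not_bounded_UNIV)
  then have "hole_components (\<lambda>_::'n face. False) = {}" by (simp add: hole_components_def)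
  then show ?thesis by (simp add: N_inf_def zero_enat_def)
qed

lemma AE_N_inf_bernoulli_product_0:
  "AE \<omega> in bernoulli_product 0. N_inf (\<omega> :: 'n::finite face \<Rightarrow> bool) = 0"
  using AE_bernoulli_product_0 by eventually_elim (simp add: N_inf_all_closed)

lemma AE_N_inf_force_open_box_faces:
  assumes "0 < p" "p \<le> 1" "AE \<omega> in bernoulli_product p. N_inf (\<omega> :: 'n::finite face \<Rightarrow> bool) = enat k"
  shows "AE \<omega> in bernoulli_product p.
    \<forall>m::nat. N_inf (force_open (box_faces (int m)) (\<omega> :: 'n face \<Rightarrow> bool)) = enat k"
proof -
  have "AE \<omega> in bernoulli_product p. N_inf (force_open (box_faces (int m)) (\<omega> :: 'n face \<Rightarrow> bool)) = enat k"
    for m :: nat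
    using AE_bernoulli_product_force_open[OF assms(1,2) finite_box_faces[of "int m"] assms(3)] by simp
  then show ?thesis by (simp add: AE_all_countable)
qed

lemma N_inf_le_1_if_invariant_under_opening_boxes:
  assumes "N_inf \<omega> = enat k" "\<And>m::nat. N_inf (force_open (box_faces (int m)) \<omega>) = enat k"
  shows "k \<le> 1"
proof -
  obtain n where n: "1 \<le> n" "\<And>C. C \<in> hole_components \<omega> \<Longrightarrow> infinite C \<Longrightarrow> \<exists>H\<in>C. H \<inter> centered_box n \<noteq> {}"
    using infinite_hole_components_meet_centered_box[OF assms(1)] by blast
  have "enat k \<le> 1"
    using N_inf_force_open_box_faces_le_1[of n \<omega>, OF n(1) n(2)] assms(2)[of "nat n"] n(1) by simp
  then show ?thesis by (simp add: one_enat_def)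
qed

theorem lemma4p1:
  fixes p :: real and k :: nat
  assumes "CARD('n::finite) \<ge> 2"
    and "0 \<le> p" and "p \<le> 1"
    and "1 \<le> k"
    and "AE \<omega> in (face_perc p :: ('n face \<Rightarrow> bool) measure). N_inf \<omega> = enat k"
  shows "k = 1"
proof -
  have M: "prob_space (bernoulli_product p :: ('n face \<Rightarrow> bool) measure)"
    by (rule prob_space_bernoulli_product)
  have N: "AE \<omega> in bernoulli_product p. N_inf (\<omega> :: 'n face \<Rightarrow> bool) = enat k"
    using assms(5) by (simp only: face_perc_eq_bernoulli_product)
  have "p \<noteq> 0"
  proof
    assume "p = 0"
    then have "AE \<omega> in bernoulli_product p. N_inf (\<omega> :: 'n face \<Rightarrow> bool) = 0"
      using AE_N_inf_bernoulli_product_0 by (simp only:)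
    with N have "AE \<omega> in (bernoulli_product p :: ('n face \<Rightarrow> bool) measure). False"
      by eventually_elim (use assms(4) in \<open>simp add: zero_enat_def\<close>)
    then show False by (simp add: prob_space.AE_False[OF M])
  qed
  then have "AE \<omega> in bernoulli_product p.
      \<forall>m::nat. N_inf (force_open (box_faces (int m)) (\<omega> :: 'n face \<Rightarrow> bool)) = enat k"
    using assms(2,3) N by (intro AE_N_inf_force_open_box_faces) simp_all
  with N obtain \<omega> :: "'n face \<Rightarrow> bool" where
    "N_inf \<omega> = enat k" "\<And>m::nat. N_inf (force_open (box_faces (int m)) \<omega>) = enat k"
    using eventually_happens'[OF prob_space.ae_filter_bot[OF M]] by (metis (mono_tags, lifting) AE_conjI)
  then have "k \<le> 1" by (rule N_inf_le_1_if_invariant_under_opening_boxes)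
  then show ?thesis using assms(4) by simp
qed

end
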